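(* In the quantum disk setting of the context, let $\alpha,\beta\in\mathbb{C}$ and $\delta\in\mathbb R\setminus\{0\}$ satisfy $\delta^2q\alpha=-\beta^*$. Then $\mathcal{J}(\xi\triangleright\phi)=\triangleright\sigma_{\mathcal{S}}(\mathcal{J}\phi\otimes\xi^* )$ for all $\xi\in\Omega^1$, $\phi\in\mathcal{S}$, and the operators $D=\triangleright\circ\nabla_{\mathcal{S}}$ (explicitly $D(a s)=\beta\frac{\partial a}{\partial\bar z}w\,\bar s$, $D(a\bar s)=\alpha\frac{\partial a}{\partial z}w\,s$), $\mathcal{J}$ and $\gamma$ satisfy $\mathcal J^2=-1$, $\mathcal J\gamma=-\gamma\mathcal J$, $\gamma^2=1$, $[\gamma,a]=0$, $D\gamma=-\gamma D$, $[a,\mathcal J b\mathcal J^{-1}]=0$, $\mathcal J D=D\mathcal J$ and $[[D,a],\mathcal J b\mathcal J^{-1}]=0$ for all $a,b\in\mathbb C_q[D]$.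
   Context: $q$ is real nonzero. $\mathbb{C}_q[D]$ is the $*$-algebra generated by $z,\bar z$ with $z\bar z=q^{-2}\bar zz-q^{-2}+1$, $z^*=\bar z$, $\mathbb Z$-graded by $|z|=1$, $|\bar z|=-1$; $w=1-\bar zz$. Its $*$-calculus has $\Omega^1$ free as a left module on ${\rm d}z,{\rm d}\bar z$ with $z\,{\rm d}z=q^{-2}{\rm d}z\,z$, $z\,{\rm d}\bar z=q^{-2}{\rm d}\bar z\,z$, $\bar z\,{\rm d}z=q^2{\rm d}z\,\bar z$, $\bar z\,{\rm d}\bar z=q^2{\rm d}\bar z\,\bar z$, ${\rm d}z\wedge{\rm d}\bar z=-q^{-2}{\rm d}\bar z\wedge{\rm d}z$, ${\rm d}z\wedge{\rm d}z={\rm d}\bar z\wedge{\rm d}\bar z=0$; write ${\rm d}a=\frac{\partial a}{\partial z}{\rm d}z+\frac{\partial a}{\partial\bar z}{\rm d}\bar z$. The spinor bimodule $\mathcal S$ is the free left module on $s,\bar s$ with $s.a=q^{|a|}a.s$, $\bar s.a=q^{|a|}a.\bar s$ for homogeneous $a$. The connection: $\nabla_{\mathcal S}(as+b\bar s)={\rm d}a\otimes s+{\rm d}b\otimes\bar s$, with $\sigma_{\mathcal S}(s\otimes{\rm d}a)=q^{|a|}{\rm d}a\otimes s$, $\sigma_{\mathcal S}(\bar s\otimes{\rm d}a)=q^{|a|}{\rm d}a\otimes\bar s$. The Clifford action is the bimodule map with ${\rm d}z\triangleright\bar s=\alpha ws$, ${\rm d}\bar z\triangleright s=\beta w\bar s$,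 ${\rm d}z\triangleright s={\rm d}\bar z\triangleright\bar s=0$. $\gamma$ is the bimodule map with $\gamma(s)=s$, $\gamma(\bar s)=-\bar s$. $\mathcal J$ is the antilinear map with $\mathcal J(s)=\delta\bar s$, $\mathcal J(\bar s)=-\delta^{-1}s$, $\mathcal J(a.\phi)=\mathcal J(\phi).a^*$, $\mathcal J(\phi.a)=a^*.\mathcal J(\phi)$. *)

theory Defs
  imports Complex_Main "HOL-Library.Poly_Mapping"
begin

text \<open>Words in the generators form the free monoid;
  the free complex algebra on z, zbar is then (word =>0 complex) with the
  convolution product of Poly_Mapping.  C_q[D] is its quotient by the two-sided
  ideal generated by  z zbar - q^-2 zbar z + q^-2 - 1.  We work with
  representatives: equality in C_q[D] is qd_eqv q (difference lies in the ideal).\<close>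

datatype gen = Z | Zb

datatype word = W "gen list"

fun unW :: "word \<Rightarrow> gen list" where "unW (W u) = u"

instantiation word :: monoid_add
begin
definition zero_word :: word where "zero_word = W []"
definition plus_word :: "word \<Rightarrow> word \<Rightarrow> word" where
  "plus_word u v = W (unW u @ unW v)"
instance
proof
  fix a b c :: word
  show "a + b + c = a + (b + c)" by (cases a; cases b; cases c) (simp add: plus_word_def)
  show "0 + a = a" by (cases a) (simp add: plus_word_def zero_word_def)
  show "a + 0 = a" by (cases a) (simp add: plus_word_def zero_word_def)
qed
end

type_synonym fa = "word \<Rightarrow>\<^sub>0 complex"

definition mono :: "gen list \<Rightarrow> fa" where
  "mono u = Poly_Mapping.single (W u) 1"

definition cst :: "complex \<Rightarrow> fa" where
  "cst c = Poly_Mapping.single 0 c"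

definition zz :: fa where "zz = mono [Z]"
definition zbar :: fa where "zbar = mono [Zb]"

definition qd_rel :: "real \<Rightarrow> fa" where
  "qd_rel q = zz * zbar - cst (complex_of_real (q powi (-2))) * (zbar * zz)
              + cst (complex_of_real (q powi (-2))) - 1"

inductive qd_ideal :: "real \<Rightarrow> fa \<Rightarrow> bool" for q where
  zero: "qd_ideal q 0"
| add: "qd_ideal q a \<Longrightarrow> qd_ideal q b \<Longrightarrow> qd_ideal q (a + b)"
| gen: "qd_ideal q (x * qd_rel q * y)"

definition qd_eqv :: "real \<Rightarrow> fa \<Rightarrow> fa \<Rightarrow> bool" where
  "qd_eqv q a b \<longleftrightarrow> qd_ideal q (a - b)"

definition ww :: fa where "ww = 1 - zbar * zz"

definition lin_ext :: "(word \<Rightarrow> fa) \<Rightarrow> fa \<Rightarrow> fa" where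
  "lin_ext h f = (\<Sum>u\<in>Poly_Mapping.keys f. cst (Poly_Mapping.lookup f u) * h u)"

definition gradel :: "gen list \<Rightarrow> int" where
  "gradel u = int (length (filter (\<lambda>g. g = Z) u)) - int (length (filter (\<lambda>g. g = Zb) u))"

definition qd_tau :: "complex \<Rightarrow> fa \<Rightarrow> fa" where
  "qd_tau t f = lin_ext (\<lambda>u. cst (t powi gradel (unW u)) * mono (unW u)) f"

fun gbar :: "gen \<Rightarrow> gen" where "gbar Z = Zb" | "gbar Zb = Z"

definition qd_star :: "fa \<Rightarrow> fa" where
  "qd_star f = (\<Sum>u\<in>Poly_Mapping.keys f.
      cst (cnj (Poly_Mapping.lookup f u)) * mono (rev (map gbar (unW u))))"

text \<open>Partial derivatives: da = (del a/del z) dz + (del a/del zbar) dzbar, determined by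
  dz, dzbar and the Leibniz rule d(ab) = da.b + a.db, using the bimodule relations
  dz.b = q^(2|b|) b.dz and dzbar.b = q^(2|b|) b.dzbar for homogeneous b.\<close>
fun pdw :: "real \<Rightarrow> gen \<Rightarrow> gen list \<Rightarrow> fa" where
  "pdw q x [] = 0"
| "pdw q x (g # v) =
     (if g = x then cst ((complex_of_real q ^ 2) powi gradel v) * mono v else 0)
     + mono [g] * pdw q x v"

definition qd_pd :: "real \<Rightarrow> gen \<Rightarrow> fa \<Rightarrow> fa" where
  "qd_pd q x f = lin_ext (\<lambda>u. pdw q x (unW u)) f"

definition padd :: "fa \<times> fa \<Rightarrow> fa \<times> fa \<Rightarrow> fa \<times> fa" where
  "padd p p' = (fst p + fst p', snd p + snd p')"

definition pneg :: "fa \<times> fa \<Rightarrow> fa \<times> fa" where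
  "pneg p = (- fst p, - snd p)"

text \<open>Omega^1: u dz + v dzbar  ~  (u, v).   S: x s + y sbar  ~  (x, y).
  Omega^1 (x)_A S ~ Omega^1 x Omega^1 via (eta1, eta2) ~ eta1 (x) s + eta2 (x) sbar.
  S (x)_A Omega^1 ~ S x S via (phi1, phi2) ~ phi1 (x) dz + phi2 (x) dzbar.\<close>

type_synonym om1 = "fa \<times> fa"
type_synonym spin = "fa \<times> fa"

definition qd_d :: "real \<Rightarrow> fa \<Rightarrow> om1" where
  "qd_d q a = (qd_pd q Z a, qd_pd q Zb a)"

definition lact :: "fa \<Rightarrow> fa \<times> fa \<Rightarrow> fa \<times> fa" where
  "lact a p = (a * fst p, a * snd p)"

text \<open>Right actions: s.a = q^|a| a.s, sbar.a = q^|a| a.sbar; dz.a = q^(2|a|) a.dz, same for dzbar.\<close>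
definition ract_S :: "real \<Rightarrow> spin \<Rightarrow> fa \<Rightarrow> spin" where
  "ract_S q p a = (fst p * qd_tau (complex_of_real q) a, snd p * qd_tau (complex_of_real q) a)"

definition ract_Om :: "real \<Rightarrow> om1 \<Rightarrow> fa \<Rightarrow> om1" where
  "ract_Om q p a = (fst p * qd_tau (complex_of_real q ^ 2) a, snd p * qd_tau (complex_of_real q ^ 2) a)"

text \<open>Involution on Omega^1: (u dz + v dzbar)* = dzbar u* + dz v*.\<close>
definition om_star :: "real \<Rightarrow> om1 \<Rightarrow> om1" where
  "om_star q \<xi> = (fst (ract_Om q (1, 0) (qd_star (snd \<xi>))), snd (ract_Om q (0, 1) (qd_star (fst \<xi>))))"

text \<open>Clifford action xi |> phi: left module map with dz |> s = 0, dz |> sbar = alpha w s,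
  dzbar |> s = beta w sbar, dzbar |> sbar = 0, extended as a bimodule map
  (u dz) |> (x s) = u (dz.x) |> s.\<close>
definition cliff :: "real \<Rightarrow> complex \<Rightarrow> complex \<Rightarrow> om1 \<Rightarrow> spin \<Rightarrow> spin" where
  "cliff q \<alpha> \<beta> \<xi> \<phi> =
     (let t = complex_of_real q ^ 2;
          u = fst \<xi>; v = snd \<xi>; x = fst \<phi>; y = snd \<phi>
      in (u * qd_tau t y * (cst \<alpha> * ww),     \<comment> \<open>u dz |> y sbar = u (q^(2|y|) y) alpha w s\<close>
          v * qd_tau t x * (cst \<beta> * ww)))    \<comment> \<open>v dzbar |> x s = v (q^(2|x|) x) beta w sbar\<close>"

definition cliffT :: "real \<Rightarrow> complex \<Rightarrow> complex \<Rightarrow> om1 \<times> om1 \<Rightarrow> spin" where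
  "cliffT q \<alpha> \<beta> T = padd (cliff q \<alpha> \<beta> (fst T) (1, 0)) (cliff q \<alpha> \<beta> (snd T) (0, 1))"

text \<open>phi (x) xi as an element of S (x)_A Omega^1 ~ S x S:
  phi (x) (u dz + v dzbar) = (phi.u) (x) dz + (phi.v) (x) dzbar.\<close>
definition tensor_SOm :: "real \<Rightarrow> spin \<Rightarrow> om1 \<Rightarrow> spin \<times> spin" where
  "tensor_SOm q \<phi> \<xi> = (ract_S q \<phi> (fst \<xi>), ract_S q \<phi> (snd \<xi>))"

text \<open>sigma_S : S (x)_A Omega^1 -> Omega^1 (x)_A S, the left module map with
  sigma_S(s (x) dz) = q dz (x) s, sigma_S(s (x) dzbar) = q^-1 dzbar (x) s, and the same with sbar
  (from sigma_S(s (x) da) = q^|a| da (x) s with a = z, zbar).\<close>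
definition sigma_S :: "real \<Rightarrow> spin \<times> spin \<Rightarrow> om1 \<times> om1" where
  "sigma_S q T =
     (let c = complex_of_real q; x1 = fst (fst T); y1 = snd (fst T);
          x2 = fst (snd T); y2 = snd (snd T)
      in ((cst c * x1, cst (inverse c) * x2), (cst c * y1, cst (inverse c) * y2)))"

definition nabla_S :: "real \<Rightarrow> spin \<Rightarrow> om1 \<times> om1" where
  "nabla_S q \<phi> = (qd_d q (fst \<phi>), qd_d q (snd \<phi>))"

definition dirac :: "real \<Rightarrow> complex \<Rightarrow> complex \<Rightarrow> spin \<Rightarrow> spin" where
  "dirac q \<alpha> \<beta> \<phi> = cliffT q \<alpha> \<beta> (nabla_S q \<phi>)"

definition gamma_S :: "spin \<Rightarrow> spin" where
  "gamma_S \<phi> = (fst \<phi>, - snd \<phi>)"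

text \<open>Real structure: J(s) = delta sbar, J(sbar) = -delta^-1 s, J(a.phi) = J(phi).a*, antilinear.\<close>
definition J_S :: "real \<Rightarrow> real \<Rightarrow> spin \<Rightarrow> spin" where
  "J_S q \<delta> \<phi> =
     (cst (- complex_of_real (inverse \<delta>)) * qd_tau (complex_of_real q) (qd_star (snd \<phi>)),
      cst (complex_of_real \<delta>) * qd_tau (complex_of_real q) (qd_star (fst \<phi>)))"

definition eqS :: "real \<Rightarrow> fa \<times> fa \<Rightarrow> fa \<times> fa \<Rightarrow> bool" where
  "eqS q p p' \<longleftrightarrow> qd_eqv q (fst p) (fst p') \<and> qd_eqv q (snd p) (snd p')"

end

theory Submission
  imports Defs
begin

text \<open>All identities are computed on representatives in the free algebra.  There the grading
  automorphism \<open>\<tau>\<^sub>t\<close> is multiplicative, the star is antimultiplicative with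
  \<open>(\<tau>\<^sub>s f)\<^sup>* = \<tau>\<^bsub>1/s\<^esub> f\<^sup>*\<close>, and \<open>\<partial>\<close> is a \<open>\<tau>\<^bsub>q\<^sup>2\<^esub>\<close>-twisted derivation
  that intertwines with \<open>\<tau>\<close> and (up to swapping \<open>z, z\<^sup>*\<close>) with the star.  The only consequence
  of the defining relation that is needed is \<open>w a = \<tau>\<^bsub>q\<^sup>2\<^esub>(a) w\<close> in \<open>\<complex>\<^sub>q[D]\<close>.
  Moreover \<open>\<J> b \<J>\<^sup>-\<^sup>1\<close> is the right action by \<open>b\<^sup>*\<close>, so the order-zero condition is
  associativity and the first-order condition says that \<open>[D, a]\<close> is a right module map,
  which again only needs \<open>w a = \<tau>\<^bsub>q\<^sup>2\<^esub>(a) w\<close>.  Compatibility of \<open>\<J>\<close> with the Clifford action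
  and \<open>\<J> D = D \<J>\<close> then come down to the scalar identity \<open>-\<delta>\<^sup>-\<^sup>1 \<beta>\<^sup>* = \<delta> q \<alpha>\<close>.\<close>

lemma W_plus: "W u + W v = W (u @ v)"
  by (simp add: plus_word_def)

lemma cst_add: "cst (a + b) = cst a + cst b"
  by (simp add: cst_def Poly_Mapping.single_add)
lemma cst_mult: "cst (a * b) = cst a * cst b"
  by (simp add: cst_def Poly_Mapping.mult_single)
lemma cst_0 [simp]: "cst 0 = 0"
  by (simp add: cst_def)
lemma cst_1 [simp]: "cst 1 = 1"
  by (simp add: cst_def)
lemma cst_uminus: "cst (- c) = - cst c"
  by (metis add_eq_0_iff cst_0 cst_add neg_eq_iff_add_eq_0)

lemma cst_neg_one_mult: "cst (- 1) * f = - f"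
  by (simp add: cst_uminus)

lemma mono_Nil [simp]: "mono [] = 1"
  by (simp add: mono_def zero_word_def[symmetric])
lemma mono_append: "mono (u @ v) = mono u * mono v"
  by (simp add: mono_def Poly_Mapping.mult_single W_plus)
lemma single_eq_cst_mono: "Poly_Mapping.single k c = cst c * mono (unW k)"
  by (cases k) (simp add: cst_def mono_def Poly_Mapping.mult_single)

lemma fa_induct [case_names zero mono add]:
  fixes f :: fa
  assumes "P 0" "\<And>u c. P (cst c * mono u)" "\<And>f g. P f \<Longrightarrow> P g \<Longrightarrow> P (f + g)"
  shows "P f"
proof (induction f rule: Poly_Mapping.update_induct)
  case const then show ?case using assms by simp
next
  case (update f a b)
  have "Poly_Mapping.update a b f = Poly_Mapping.single a b + f"
    using update.hyps(1)
    by (intro poly_mapping_eqI) (auto simp: Poly_Mapping.lookup_update Poly_Mapping.lookup_add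
        Poly_Mapping.lookup_single Poly_Mapping.in_keys_iff when_def)
  then show ?case using assms update by (simp add: single_eq_cst_mono)
qed

lemma cst_commute: "cst c * f = f * cst c"
proof (induction f rule: fa_induct)
  case (mono u d)
  have "cst d * mono u = Poly_Mapping.single (W u) d"
    by (simp add: single_eq_cst_mono)
  then show ?case by (simp add: cst_def Poly_Mapping.mult_single mult.commute)
qed (auto simp: distrib_left distrib_right)

lemma cst_left_commute: "f * (cst c * g) = cst c * (f * g)"
  by (metis cst_commute mult.assoc)
lemma cst_cst: "cst c * (cst d * f) = cst (c * d) * f"
  by (simp add: cst_mult mult.assoc)
lemma mono_cst_left_commute: "mono u * (cst c * g) = cst c * (mono u * g)"
  by (rule cst_left_commute)
lemma mono_mult_assoc: "mono u * (mono v * f) = mono (u @ v) * f"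
  by (simp add: mono_append mult.assoc)
lemma cst_mult_cst_mult: "(cst c * f) * (cst d * g) = cst (c * d) * (f * g)"
  by (metis cst_cst cst_left_commute mult.assoc)
lemma cst_mono_mult: "(cst a * mono u) * (cst b * mono v) = cst (a * b) * mono (u @ v)"
  by (simp only: cst_mult_cst_mult mono_append)

definition semilin_ext :: "(complex \<Rightarrow> complex) \<Rightarrow> (word \<Rightarrow> fa) \<Rightarrow> fa \<Rightarrow> fa" where
  "semilin_ext g h f = (\<Sum>u\<in>Poly_Mapping.keys f. cst (g (Poly_Mapping.lookup f u)) * h u)"

lemma semilin_ext_superset:
  assumes "finite S" "Poly_Mapping.keys f \<subseteq> S" "g 0 = 0"
  shows "semilin_ext g h f = (\<Sum>u\<in>S. cst (g (Poly_Mapping.lookup f u)) * h u)"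
  unfolding semilin_ext_def
  by (rule sum.mono_neutral_left) (use assms in \<open>auto simp: Poly_Mapping.in_keys_iff\<close>)

lemma semilin_ext_add:
  assumes "g 0 = 0" "\<And>a b. g (a + b) = g a + g b"
  shows "semilin_ext g h (f1 + f2) = semilin_ext g h f1 + semilin_ext g h f2"
proof -
  let ?S = "Poly_Mapping.keys f1 \<union> Poly_Mapping.keys f2"
  have "semilin_ext g h (f1 + f2) = (\<Sum>u\<in>?S. cst (g (Poly_Mapping.lookup (f1 + f2) u)) * h u)"
    by (rule semilin_ext_superset) (use assms Poly_Mapping.keys_add[of f1 f2] in auto)
  also have "\<dots> = (\<Sum>u\<in>?S. cst (g (Poly_Mapping.lookup f1 u)) * h u)
     + (\<Sum>u\<in>?S. cst (g (Poly_Mapping.lookup f2 u)) * h u)"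
    by (simp add: Poly_Mapping.lookup_add assms cst_add distrib_right sum.distrib)
  also have "\<dots> = semilin_ext g h f1 + semilin_ext g h f2"
    by (subst (1 2) semilin_ext_superset[symmetric]) (use assms in auto)
  finally show ?thesis .
qed

lemma semilin_ext_cst_mono:
  assumes "g 0 = 0"
  shows "semilin_ext g h (cst c * mono u) = cst (g c) * h (W u)"
proof -
  have "cst c * mono u = Poly_Mapping.single (W u) c"
    by (simp add: single_eq_cst_mono)
  then show ?thesis
    using assms by (cases "c = 0") (auto simp: semilin_ext_def)
qed

lemma semilin_ext_0 [simp]: "semilin_ext g h 0 = 0"
  by (simp add: semilin_ext_def)

lemma lin_ext_eq_semilin_ext: "lin_ext = semilin_ext id"
  by (auto simp: fun_eq_iff lin_ext_def semilin_ext_def)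
lemma qd_star_eq_semilin_ext: "qd_star = semilin_ext cnj (\<lambda>u. mono (rev (map gbar (unW u))))"
  by (auto simp: fun_eq_iff qd_star_def semilin_ext_def)

lemma lin_ext_add: "lin_ext h (f + g) = lin_ext h f + lin_ext h g"
  by (simp add: lin_ext_eq_semilin_ext semilin_ext_add)
lemma lin_ext_cst_mono: "lin_ext h (cst c * mono u) = cst c * h (W u)"
  by (simp add: lin_ext_eq_semilin_ext semilin_ext_cst_mono)
lemma lin_ext_0 [simp]: "lin_ext h 0 = 0"
  by (simp add: lin_ext_eq_semilin_ext)

lemma gradel_append: "gradel (u @ v) = gradel u + gradel v"
  by (simp add: gradel_def)
lemma gradel_Cons: "gradel (g # v) = gradel [g] + gradel v"
  by (simp add: gradel_def)
lemma gradel_Nil [simp]: "gradel [] = 0"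
  by (simp add: gradel_def)
lemma gradel_Z [simp]: "gradel [Z] = 1"
  by (simp add: gradel_def)
lemma gradel_Zb [simp]: "gradel [Zb] = - 1"
  by (simp add: gradel_def)
lemma gradel_rev_gbar: "gradel (rev (map gbar u)) = - gradel u"
proof (induction u)
  case (Cons g u) then show ?case by (cases g) (auto simp: gradel_def)
qed simp

lemma gbar_gbar [simp]: "gbar (gbar g) = g"
  by (cases g) auto

lemma tau_add: "qd_tau t (f + g) = qd_tau t f + qd_tau t g"
  by (simp add: qd_tau_def lin_ext_add)
lemma tau_cst_mono: "qd_tau t (cst c * mono u) = cst (c * t powi gradel u) * mono u"
  by (simp add: qd_tau_def lin_ext_cst_mono cst_cst)
lemma tau_0 [simp]: "qd_tau t 0 = 0"
  by (simp add: qd_tau_def)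
lemma tau_uminus: "qd_tau t (- f) = - qd_tau t f"
  by (metis add_eq_0_iff tau_0 tau_add)
lemma tau_diff: "qd_tau t (f - g) = qd_tau t f - qd_tau t g"
  by (metis diff_conv_add_uminus tau_add tau_uminus)
lemma tau_cst_mult: "qd_tau t (cst c * f) = cst c * qd_tau t f"
  by (induction f rule: fa_induct) (auto simp: tau_cst_mono cst_cst tau_add distrib_left mult.assoc)
lemma tau_mono: "qd_tau t (mono u) = cst (t powi gradel u) * mono u"
  using tau_cst_mono[of t 1 u] by simp
lemma tau_1 [simp]: "qd_tau t 1 = 1"
  using tau_mono[of t "[]"] by simp

lemma tau_mult:
  assumes "t \<noteq> 0"
  shows "qd_tau t (f * g) = qd_tau t f * qd_tau t g"
proof (induction f rule: fa_induct)
  case (mono u c)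
  show ?case
  proof (induction g rule: fa_induct)
    case (mono v d)
    then show ?case using assms
      by (simp only: cst_mono_mult tau_cst_mono) (simp add: gradel_append power_int_add mult_ac)
  qed (auto simp: distrib_left tau_add)
qed (auto simp: distrib_right tau_add)

lemma tau_tau: "qd_tau s (qd_tau r f) = qd_tau (s * r) f"
  by (induction f rule: fa_induct) (auto simp: tau_add tau_cst_mono power_int_mult_distrib mult_ac)

lemma tau_by_1 [simp]: "qd_tau 1 f = f"
  by (induction f rule: fa_induct) (auto simp: tau_add tau_cst_mono)

lemma star_add: "qd_star (f + g) = qd_star f + qd_star g"
  by (simp add: qd_star_eq_semilin_ext semilin_ext_add)
lemma star_cst_mono: "qd_star (cst c * mono u) = cst (cnj c) * mono (rev (map gbar u))"
  by (simp add: qd_star_eq_semilin_ext semilin_ext_cst_mono)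
lemma star_0 [simp]: "qd_star 0 = 0"
  by (simp add: qd_star_eq_semilin_ext)
lemma star_uminus: "qd_star (- f) = - qd_star f"
  by (metis add_eq_0_iff star_0 star_add)
lemma star_diff: "qd_star (f - g) = qd_star f - qd_star g"
  by (metis diff_conv_add_uminus star_add star_uminus)
lemma star_cst_mult: "qd_star (cst c * f) = cst (cnj c) * qd_star f"
  by (induction f rule: fa_induct) (auto simp: star_cst_mono cst_cst star_add distrib_left)
lemma star_mono: "qd_star (mono u) = mono (rev (map gbar u))"
  using star_cst_mono[of 1 u] by simp
lemma star_1 [simp]: "qd_star 1 = 1"
  using star_mono[of "[]"] by simp
lemma star_cst [simp]: "qd_star (cst c) = cst (cnj c)"
  using star_cst_mult[of c 1] by simp

lemma star_mult: "qd_star (f * g) = qd_star g * qd_star f"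
proof (induction f rule: fa_induct)
  case (mono u c)
  show ?case
  proof (induction g rule: fa_induct)
    case (mono v d)
    then show ?case by (simp only: cst_mono_mult star_cst_mono) (simp add: mult_ac)
  qed (auto simp: distrib_left distrib_right star_add)
qed (auto simp: distrib_left distrib_right star_add)

lemma star_star [simp]: "qd_star (qd_star f) = f"
  by (induction f rule: fa_induct) (auto simp: star_add star_cst_mono rev_map comp_def)

lemma star_tau: "qd_star (qd_tau s f) = qd_tau (inverse (cnj s)) (qd_star f)"
  by (induction f rule: fa_induct)
     (auto simp: star_add tau_add tau_cst_mono star_cst_mono gradel_rev_gbar power_int_minus
       power_int_inverse)

lemma pd_add: "qd_pd q x (f + g) = qd_pd q x f + qd_pd q x g"
  by (simp add: qd_pd_def lin_ext_add)
lemma pd_cst_mono: "qd_pd q x (cst c * mono u) = cst c * pdw q x u"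
  by (simp add: qd_pd_def lin_ext_cst_mono)
lemma pd_0 [simp]: "qd_pd q x 0 = 0"
  by (simp add: qd_pd_def)
lemma pd_uminus: "qd_pd q x (- f) = - qd_pd q x f"
  by (metis add_eq_0_iff pd_0 pd_add)
lemma pd_mono: "qd_pd q x (mono u) = pdw q x u"
  using pd_cst_mono[of q x 1 u] by simp
lemma pd_cst_mult: "qd_pd q x (cst c * f) = cst c * qd_pd q x f"
  by (induction f rule: fa_induct) (auto simp: pd_cst_mono cst_cst pd_add distrib_left mult.assoc)

lemma pdw_append:
  assumes "q \<noteq> 0"
  shows "pdw q x (u @ v) = pdw q x u * qd_tau (complex_of_real q ^ 2) (mono v) + mono u * pdw q x v"
proof (induction u)
  case (Cons g u)
  show ?case using assms
    by (simp add: Cons tau_mono distrib_left distrib_right mono_cst_left_commute cst_cst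
        mono_mult_assoc mult.assoc gradel_append power_int_add flip: mono_append)
qed simp

lemma pd_mult:
  assumes "q \<noteq> 0"
  shows "qd_pd q x (f * g) = qd_pd q x f * qd_tau (complex_of_real q ^ 2) g + f * qd_pd q x g"
proof (induction f rule: fa_induct)
  case (mono u c)
  show ?case
  proof (induction g rule: fa_induct)
    case (mono v d)
    show ?case
      by (simp only: cst_mono_mult pd_cst_mono tau_cst_mult pdw_append[OF assms])
         (simp only: cst_mult_cst_mult distrib_left)
  qed (auto simp: distrib_left pd_add tau_add)
qed (auto simp: distrib_right pd_add)

lemma tau_pdw:
  assumes "s \<noteq> 0"
  shows "qd_tau s (pdw q x u) = cst (s powi (gradel u - gradel [x])) * pdw q x u"
proof (induction u)
  case (Cons g v)
  define c where "c = s powi (gradel [g] + gradel v - gradel [x])"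
  define A where "A = (if g = x then cst ((complex_of_real q ^ 2) powi gradel v) * mono v else 0)"
  have c_split: "c = s powi gradel [g] * s powi (gradel v - gradel [x])"
    unfolding c_def using assms by (simp add: add_diff_eq[symmetric] power_int_add del: add_diff_eq)
  have "qd_tau s A = cst c * A"
    by (cases "g = x") (simp_all add: A_def c_def tau_cst_mult tau_mono cst_cst mult.commute)
  moreover have "qd_tau s (mono [g] * pdw q x v) = cst c * (mono [g] * pdw q x v)"
    by (simp only: tau_mult[OF assms] Cons tau_mono cst_mult_cst_mult c_split)
  moreover have "pdw q x (g # v) = A + mono [g] * pdw q x v"
    by (simp add: A_def)
  ultimately show ?case
    by (simp add: tau_add distrib_left c_def gradel_Cons[of g v])
qed simp

lemma pd_tau:
  assumes "s \<noteq> 0"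
  shows "qd_pd q x (qd_tau s f) = cst (s powi gradel [x]) * qd_tau s (qd_pd q x f)"
proof (induction f rule: fa_induct)
  case (mono u c)
  have "s powi gradel u = s powi gradel [x] * s powi (gradel u - gradel [x])"
    using assms by (subst power_int_add[symmetric]) auto
  then show ?case using assms
    by (simp add: tau_cst_mono pd_cst_mono pd_cst_mult tau_cst_mult tau_pdw cst_cst mult_ac
        tau_mono pd_mono)
qed (auto simp: pd_add tau_add distrib_left)

lemma star_pdw:
  assumes "q \<noteq> 0"
  shows "qd_star (pdw q x u) =
    qd_tau (inverse (complex_of_real q ^ 2)) (pdw q (gbar x) (rev (map gbar u)))"
proof (induction u)
  case (Cons g v)
  let ?t = "complex_of_real q ^ 2"
  have t0: "inverse ?t \<noteq> 0" using assms by simp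
  have tau_inverse: "qd_tau (inverse ?t) (qd_tau ?t X) = X" for X
    using assms by (simp add: tau_tau)
  have pdw_gbar: "pdw q (gbar x) [gbar g] = (if g = x then 1 else 0)"
    by (cases g; cases x) auto
  have "rev (map gbar (g # v)) = rev (map gbar v) @ [gbar g]" by simp
  then show ?case
    by (simp only: pdw_append[OF assms] tau_add tau_mult[OF t0] tau_inverse pdw_gbar)
       (simp add: Cons star_add star_mult star_cst_mult star_mono tau_mono gradel_rev_gbar
         power_int_minus power_int_inverse, simp add: cst_commute)
qed simp

lemma star_pd:
  assumes "q \<noteq> 0"
  shows "qd_star (qd_pd q x f) =
    qd_tau (inverse (complex_of_real q ^ 2)) (qd_pd q (gbar x) (qd_star f))"
  by (induction f rule: fa_induct)
     (auto simp: pd_add star_add tau_add pd_cst_mono star_cst_mult star_pdw[OF assms]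
       pd_cst_mult tau_cst_mult pd_mono star_mono)

lemma qd_ideal_lmult: "qd_ideal q f \<Longrightarrow> qd_ideal q (g * f)"
proof (induction rule: qd_ideal.induct)
  case (gen x y) then show ?case using qd_ideal.gen[of q "g * x" y] by (simp add: mult.assoc)
qed (auto simp: distrib_left intro: qd_ideal.intros)

lemma qd_ideal_rmult: "qd_ideal q f \<Longrightarrow> qd_ideal q (f * g)"
proof (induction rule: qd_ideal.induct)
  case (gen x y) then show ?case using qd_ideal.gen[of q x "y * g"] by (simp add: mult.assoc)
qed (auto simp: distrib_right intro: qd_ideal.intros)

lemma qd_ideal_uminus: "qd_ideal q f \<Longrightarrow> qd_ideal q (- f)"
  using qd_ideal_lmult[of q f "-1"] by simp

lemma qd_eqv_refl [simp]: "qd_eqv q a a"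
  by (simp add: qd_eqv_def qd_ideal.zero)
lemma qd_eqv_sym: "qd_eqv q a b \<Longrightarrow> qd_eqv q b a"
  unfolding qd_eqv_def using qd_ideal_uminus by fastforce
lemma qd_eqv_trans: "qd_eqv q a b \<Longrightarrow> qd_eqv q b c \<Longrightarrow> qd_eqv q a c"
  unfolding qd_eqv_def using qd_ideal.add by fastforce
lemma qd_eqv_add: "qd_eqv q a b \<Longrightarrow> qd_eqv q c d \<Longrightarrow> qd_eqv q (a + c) (b + d)"
  unfolding qd_eqv_def using qd_ideal.add by (fastforce simp: algebra_simps)
lemma qd_eqv_lmult: "qd_eqv q a b \<Longrightarrow> qd_eqv q (c * a) (c * b)"
  unfolding qd_eqv_def using qd_ideal_lmult by (fastforce simp: right_diff_distrib)
lemma qd_eqv_rmult: "qd_eqv q a b \<Longrightarrow> qd_eqv q (a * c) (b * c)"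
  unfolding qd_eqv_def using qd_ideal_rmult by (fastforce simp: left_diff_distrib)

lemma eqS_refl [simp]: "eqS q p p"
  by (simp add: eqS_def)

lemma zbar_zz: "zbar * zz = mono [Zb, Z]"
  by (simp add: zbar_def zz_def flip: mono_append)
lemma tau_ww: "s \<noteq> 0 \<Longrightarrow> qd_tau s ww = ww"
  by (simp add: ww_def zbar_zz tau_diff tau_mono gradel_def)
lemma star_ww: "qd_star ww = ww"
  by (simp add: ww_def zbar_zz star_diff star_mono)

lemma ww_zz:
  assumes "q \<noteq> 0"
  shows "qd_eqv q (ww * zz) (cst (complex_of_real q ^ 2) * zz * ww)"
proof -
  have "(complex_of_real q)\<^sup>2 * complex_of_real q powi - 2 = 1"
    using assms by (auto simp: power_int_minus field_simps)
  then have "ww * zz - cst (complex_of_real q ^ 2) * zz * ww = cst (complex_of_real q ^ 2) * qd_rel q * zz"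
    unfolding ww_def qd_rel_def by (simp add: algebra_simps cst_cst)
  then show ?thesis unfolding qd_eqv_def using qd_ideal.gen by metis
qed

lemma ww_zbar:
  assumes "q \<noteq> 0"
  shows "qd_eqv q (ww * zbar) (cst (inverse (complex_of_real q ^ 2)) * zbar * ww)"
proof -
  have "inverse (complex_of_real q ^ 2) = complex_of_real (q powi (-2))"
    using assms by (auto simp: power_int_minus field_simps)
  then have "ww * zbar - cst (inverse (complex_of_real q ^ 2)) * zbar * ww = (- zbar) * qd_rel q * 1"
    unfolding ww_def qd_rel_def
    by (simp add: algebra_simps cst_cst cst_left_commute cst_commute[of _ zbar])
  then show ?thesis unfolding qd_eqv_def using qd_ideal.gen by metis
qed

lemma ww_mono:
  assumes "q \<noteq> 0"
  shows "qd_eqv q (ww * mono u) (qd_tau (complex_of_real q ^ 2) (mono u) * ww)"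
proof (induction u)
  case (Cons g v)
  let ?t = "complex_of_real q ^ 2"
  let ?g = "cst (?t powi gradel [g]) * mono [g]"
  have ww_gen: "qd_eqv q (ww * mono [g]) (?g * ww)"
    using ww_zz[OF assms] ww_zbar[OF assms]
    by (cases g) (simp_all add: zz_def zbar_def gradel_def power_int_minus)
  have "ww * mono (g # v) = (ww * mono [g]) * mono v"
    using mono_append[of "[g]" v] by (simp add: mult.assoc)
  also have "qd_eqv q \<dots> (?g * (ww * mono v))"
    using qd_eqv_rmult[OF ww_gen] by (simp add: mult.assoc)
  finally have "qd_eqv q (ww * mono (g # v)) (?g * (ww * mono v))" .
  moreover have "qd_eqv q (?g * (ww * mono v)) (?g * (qd_tau ?t (mono v) * ww))"
    by (rule qd_eqv_lmult[OF Cons])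
  moreover have "?g * (qd_tau ?t (mono v) * ww) = qd_tau ?t (mono (g # v)) * ww"
    using assms
    by (simp add: tau_mono gradel_Cons[of g v] power_int_add mono_cst_left_commute
        mono_mult_assoc cst_cst mult.assoc)
  ultimately show ?case using qd_eqv_trans by metis
qed simp

lemma ww_commute:
  assumes "q \<noteq> 0"
  shows "qd_eqv q (ww * f) (qd_tau (complex_of_real q ^ 2) f * ww)"
proof (induction f rule: fa_induct)
  case (mono u c)
  have "ww * (cst c * mono u) = cst c * (ww * mono u)"
    by (rule cst_left_commute)
  then show ?case
    using qd_eqv_lmult[OF ww_mono[OF assms, of u], of "cst c"]
    by (simp add: tau_cst_mult mult.assoc)
next
  case (add f g) then show ?case by (simp add: distrib_left distrib_right tau_add qd_eqv_add)
qed simp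

text \<open>Moving scalars to the front of products; the specialised forms avoid looping on
  products of two scalars.\<close>

lemma cst_to_front:
  "qd_tau s X * (cst c * Y) = cst c * (qd_tau s X * Y)"
  "qd_star X * (cst c * Y) = cst c * (qd_star X * Y)"
  "qd_pd q g X * (cst c * Y) = cst c * (qd_pd q g X * Y)"
  "ww * (cst c * Y) = cst c * (ww * Y)"
  "qd_tau s X * cst c = cst c * qd_tau s X"
  "qd_star X * cst c = cst c * qd_star X"
  "qd_pd q g X * cst c = cst c * qd_pd q g X"
  "ww * cst c = cst c * ww"
  by (rule cst_left_commute cst_commute[symmetric])+

lemmas cst_normalize = cst_to_front cst_cst mult.assoc

definition dirac_commutator :: "real \<Rightarrow> complex \<Rightarrow> complex \<Rightarrow> fa \<Rightarrow> spin \<Rightarrow> spin" where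
  "dirac_commutator q \<alpha> \<beta> a \<phi> = padd (dirac q \<alpha> \<beta> (lact a \<phi>)) (pneg (lact a (dirac q \<alpha> \<beta> \<phi>)))"

lemma dirac_explicit:
  "dirac q \<alpha> \<beta> (x, y) = (cst \<alpha> * qd_pd q Z y * ww, cst \<beta> * qd_pd q Zb x * ww)"
  by (simp add: dirac_def cliffT_def nabla_S_def qd_d_def cliff_def padd_def Let_def cst_normalize)

lemma J_S_J_S:
  assumes "q \<noteq> 0" "\<delta> \<noteq> 0"
  shows "J_S q \<delta> (J_S q \<delta> \<phi>) = pneg \<phi>"
proof -
  have "complex_of_real q * inverse (cnj (complex_of_real q)) = 1"
    using assms by simp
  then show ?thesis using assms
    by (simp add: J_S_def pneg_def star_cst_mult star_tau tau_tau tau_cst_mult cst_cst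
        cst_neg_one_mult flip: cst_uminus)
qed

lemma J_S_gamma_S: "J_S q \<delta> (gamma_S \<phi>) = pneg (gamma_S (J_S q \<delta> \<phi>))"
  by (simp add: J_S_def gamma_S_def pneg_def star_uminus tau_uminus)

lemma gamma_S_gamma_S: "gamma_S (gamma_S \<phi>) = \<phi>"
  by (simp add: gamma_S_def)

lemma gamma_S_lact: "gamma_S (lact a \<phi>) = lact a (gamma_S \<phi>)"
  by (simp add: gamma_S_def lact_def)

lemma dirac_gamma_S: "dirac q \<alpha> \<beta> (gamma_S \<phi>) = pneg (gamma_S (dirac q \<alpha> \<beta> \<phi>))"
  by (cases \<phi>) (simp add: dirac_explicit gamma_S_def pneg_def pd_uminus)

lemma J_S_lact_inv_J_S:
  assumes "q \<noteq> 0" "\<delta> \<noteq> 0"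
  shows "J_S q \<delta> (lact b (inv (J_S q \<delta>) \<phi>)) = ract_S q \<phi> (qd_star b)"
proof -
  have "surj (J_S q \<delta>)"
    by (metis J_S_J_S[OF assms] pneg_def fst_conv snd_conv minus_minus surj_def prod.collapse)
  then have "J_S q \<delta> (inv (J_S q \<delta>) \<phi>) = \<phi>"
    by (simp add: surj_f_inv_f)
  moreover have "J_S q \<delta> (lact b \<chi>) = ract_S q (J_S q \<delta> \<chi>) (qd_star b)" for \<chi>
    using assms by (simp add: J_S_def lact_def ract_S_def star_mult tau_mult mult.assoc)
  ultimately show ?thesis by simp
qed

lemma lact_ract_S: "lact a (ract_S q \<phi> b) = ract_S q (lact a \<phi>) b"
  by (simp add: lact_def ract_S_def mult.assoc)

lemma dirac_commutator_ract_S: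
  assumes "q \<noteq> 0"
  shows "eqS q (dirac_commutator q \<alpha> \<beta> a (ract_S q \<phi> b))
               (ract_S q (dirac_commutator q \<alpha> \<beta> a \<phi>) b)"
proof -
  obtain x y where \<phi>: "\<phi> = (x, y)" by fastforce
  have "complex_of_real q ^ 2 \<noteq> 0" using assms by simp
  then show ?thesis
    unfolding eqS_def dirac_commutator_def \<phi> lact_def ract_S_def prod.sel dirac_explicit
    using qd_eqv_sym[OF ww_commute[OF assms, of "qd_tau (complex_of_real q) b"]]
    by (simp add: lact_def padd_def pneg_def pd_mult[OF assms] tau_mult distrib_left
        distrib_right cst_normalize cst_left_commute[of a] qd_eqv_lmult)
qed

lemma real_structure_scalars:
  fixes s d \<alpha> \<beta> :: complex
  assumes "s \<noteq> 0" "d \<noteq> 0" "cnj s = s" "cnj d = d" and hab: "d\<^sup>2 * s * \<alpha> = - cnj \<beta>"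
  shows "- (inverse d * cnj \<beta>) = d * (s * \<alpha>)"
    and "d * cnj \<alpha> = - (inverse d * (inverse s * \<beta>))"
proof -
  have "d\<^sup>2 * s * cnj \<alpha> = - \<beta>"
    using arg_cong[OF hab, of cnj] assms(3,4) by simp
  then show "d * cnj \<alpha> = - (inverse d * (inverse s * \<beta>))"
    using assms(1,2) by (simp add: field_simps power2_eq_square)
  show "- (inverse d * cnj \<beta>) = d * (s * \<alpha>)"
    using assms(2) hab by (simp add: field_simps power2_eq_square)
qed

lemma J_S_cliff:
  assumes hq: "q \<noteq> 0" and h\<delta>: "\<delta> \<noteq> 0"
    and hab: "complex_of_real (\<delta>\<^sup>2 * q) * \<alpha> = - cnj \<beta>"
  shows "eqS q (J_S q \<delta> (cliff q \<alpha> \<beta> \<xi> \<phi>))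
            (cliffT q \<alpha> \<beta> (sigma_S q (tensor_SOm q (J_S q \<delta> \<phi>) (om_star q \<xi>))))"
proof -
  obtain u v where \<xi>: "\<xi> = (u, v)" by fastforce
  obtain x y where \<phi>: "\<phi> = (x, y)" by fastforce
  define s where "s = complex_of_real q"
  define d where "d = complex_of_real \<delta>"
  have s0: "s \<noteq> 0" and d0: "d \<noteq> 0" and s_real: "cnj s = s" and d_real: "cnj d = d"
    using hq h\<delta> by (auto simp: s_def d_def)
  have hab': "d\<^sup>2 * s * \<alpha> = - cnj \<beta>"
    using hab by (simp add: s_def d_def)
  note scalars = real_structure_scalars[OF s0 d0 s_real d_real hab']
  have exps: "s\<^sup>2 * (s * inverse (s\<^sup>2)) = s" "s\<^sup>2 * s = s * s\<^sup>2"
    using s0 by (auto simp: field_simps)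
  have ww_swap: "qd_eqv q (ww * (qd_tau (s * inverse (s\<^sup>2)) (qd_star X) * qd_tau s (qd_star Y)))
               (qd_tau s (qd_star X) * (qd_tau (s * s\<^sup>2) (qd_star Y) * ww))" for X Y
    using ww_commute[OF hq, of "qd_tau (s * inverse (s\<^sup>2)) (qd_star X) * qd_tau s (qd_star Y)"] s0
    by (simp add: tau_mult tau_tau exps mult.assoc flip: s_def)
  show ?thesis
    unfolding eqS_def \<xi> \<phi>
    using hq s0
    by (simp add: s_real cliff_def J_S_def Let_def star_mult star_cst_mult star_ww tau_ww tau_mult
        star_tau tau_tau tau_cst_mult cst_normalize cliffT_def sigma_S_def tensor_SOm_def om_star_def
        ract_Om_def ract_S_def padd_def flip: s_def d_def)
       (simp add: scalars, simp add: mult_ac qd_eqv_lmult ww_swap)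
qed

lemma J_S_dirac:
  assumes hq: "q \<noteq> 0" and h\<delta>: "\<delta> \<noteq> 0"
    and hab: "complex_of_real (\<delta>\<^sup>2 * q) * \<alpha> = - cnj \<beta>"
  shows "eqS q (J_S q \<delta> (dirac q \<alpha> \<beta> \<phi>)) (dirac q \<alpha> \<beta> (J_S q \<delta> \<phi>))"
proof -
  obtain x y where \<phi>: "\<phi> = (x, y)" by fastforce
  define s where "s = complex_of_real q"
  define d where "d = complex_of_real \<delta>"
  have s0: "s \<noteq> 0" and d0: "d \<noteq> 0" and s_real: "cnj s = s" and d_real: "cnj d = d"
    using hq h\<delta> by (auto simp: s_def d_def)
  have hab': "d\<^sup>2 * s * \<alpha> = - cnj \<beta>"
    using hab by (simp add: s_def d_def)
  note scalars = real_structure_scalars[OF s0 d0 s_real d_real hab']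
  have exp: "s\<^sup>2 * (s * inverse (s\<^sup>2)) = s"
    using s0 by (auto simp: field_simps)
  have ww_swap: "qd_eqv q (ww * qd_tau (s * inverse (s\<^sup>2)) P) (qd_tau s P * ww)" for P
    using ww_commute[OF hq, of "qd_tau (s * inverse (s\<^sup>2)) P"] s0
    by (simp add: tau_tau exp flip: s_def)
  show ?thesis
    unfolding eqS_def \<phi> J_S_def dirac_explicit
    using hq s0
    by (simp add: s_real J_S_def star_mult star_cst_mult star_ww tau_ww tau_mult star_tau tau_tau
        tau_cst_mult cst_normalize star_pd pd_tau pd_cst_mult flip: s_def d_def)
       (simp add: scalars, simp add: mult_ac qd_eqv_lmult ww_swap)
qed

theorem mainTheorem9:
  fixes q \<delta> :: real and \<alpha> \<beta> :: complex
  assumes hq: "q \<noteq> 0" and h\<delta>: "\<delta> \<noteq> 0"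
    and hab: "complex_of_real (\<delta>\<^sup>2 * q) * \<alpha> = - cnj \<beta>"
  defines "J \<equiv> J_S q \<delta>" and "D \<equiv> dirac q \<alpha> \<beta>"
  shows
    "(\<forall>\<xi> \<phi>. eqS q (J (cliff q \<alpha> \<beta> \<xi> \<phi>))
                   (cliffT q \<alpha> \<beta> (sigma_S q (tensor_SOm q (J \<phi>) (om_star q \<xi>)))))
   \<and> (\<forall>a. eqS q (D (a, 0)) (0, cst \<beta> * qd_pd q Zb a * ww)
        \<and> eqS q (D (0, a)) (cst \<alpha> * qd_pd q Z a * ww, 0))
   \<and> (\<forall>\<phi>. eqS q (J (J \<phi>)) (pneg \<phi>))
   \<and> (\<forall>\<phi>. eqS q (J (gamma_S \<phi>)) (pneg (gamma_S (J \<phi>))))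
   \<and> (\<forall>\<phi>. eqS q (gamma_S (gamma_S \<phi>)) \<phi>)
   \<and> (\<forall>a \<phi>. eqS q (gamma_S (lact a \<phi>)) (lact a (gamma_S \<phi>)))
   \<and> (\<forall>\<phi>. eqS q (D (gamma_S \<phi>)) (pneg (gamma_S (D \<phi>))))
   \<and> (\<forall>a b \<phi>. eqS q (lact a (J (lact b (inv J \<phi>)))) (J (lact b (inv J (lact a \<phi>)))))
   \<and> (\<forall>\<phi>. eqS q (J (D \<phi>)) (D (J \<phi>)))
   \<and> (\<forall>a b \<phi>.
        eqS q (padd (D (lact a (J (lact b (inv J \<phi>))))) (pneg (lact a (D (J (lact b (inv J \<phi>)))))))
              (J (lact b (inv J (padd (D (lact a \<phi>)) (pneg (lact a (D \<phi>))))))))"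
  unfolding J_def D_def J_S_lact_inv_J_S[OF hq h\<delta>]
  using J_S_cliff[OF hq h\<delta> hab] J_S_dirac[OF hq h\<delta> hab]
    dirac_commutator_ract_S[OF hq, unfolded dirac_commutator_def]
  by (simp add: dirac_explicit J_S_J_S[OF hq h\<delta>] J_S_gamma_S gamma_S_gamma_S
      gamma_S_lact dirac_gamma_S lact_ract_S)

end
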